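(* Let $\xi$ be a linear subspace of $\mathbb{R}^n$, and let $K$ and $L$ be compact convex sets contained in $\xi$. Let $d\ge 1$. Suppose that, for each $d$-dimensional linear subspace $\eta \subseteq \xi$, the projection $L_\eta$ contains a translate of $K_\eta$. Then $L_\eta$ contains a translate of $K_\eta$ for every $d$-dimensional linear subspace $\eta \subseteq \mathbb{R}^n$.
   Context: For a set $S\subseteq\mathbb{R}^n$ and a linear subspace $\eta$, $S_\eta$ denotes the orthogonal projection of $S$ onto $\eta$. *)

theory Defs
  imports "HOL-Analysis.Analysis"
begin

definition orth_proj :: "'a::euclidean_space set \<Rightarrow> 'a \<Rightarrow> 'a" where
  "orth_proj \<eta> x = (THE y. y \<in> \<eta> \<and> (\<forall>z\<in>\<eta>. orthogonal (x - y) z))"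

definition set_proj :: "'a::euclidean_space set \<Rightarrow> 'a set \<Rightarrow> 'a set" where
  "set_proj \<eta> S = orth_proj \<eta> ` S"

definition contains_translate :: "'a::euclidean_space set \<Rightarrow> 'a set \<Rightarrow> bool" where
  "contains_translate B A \<longleftrightarrow> (\<exists>t. (\<lambda>x. t + x) ` A \<subseteq> B)"

end

theory Submission
  imports Defs
begin

text \<open>Let \<open>P\<close> be the projection onto \<open>\<xi>\<close>. Given a \<open>d\<close>-dimensional \<open>\<eta>\<close>, extend
  \<open>P \<eta>\<close> (of dimension at most \<open>d\<close>) to a \<open>d\<close>-dimensional subspace \<open>W \<subseteq> \<xi>\<close>. On \<open>\<xi>\<close>,
  projecting onto \<open>\<eta>\<close> factors through projecting onto \<open>W\<close>: a vector of \<open>\<xi>\<close> orthogonal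
  to \<open>W\<close> is orthogonal to \<open>P \<eta>\<close> and to \<open>\<xi>\<^sup>\<bottom>\<close>, hence to \<open>\<eta>\<close>. So \<open>K\<^sub>\<eta>\<close>, \<open>L\<^sub>\<eta>\<close> are
  linear images of \<open>K\<^sub>W\<close>, \<open>L\<^sub>W\<close>, and linear maps preserve containment of translates.\<close>

lemma orth_proj_ex1:
  fixes S :: "'a::euclidean_space set"
  assumes "subspace S"
  shows "\<exists>!y. y \<in> S \<and> (\<forall>z\<in>S. orthogonal (x - y) z)"
proof -
  obtain y z where y: "y \<in> span S" and z: "\<And>w. w \<in> span S \<Longrightarrow> orthogonal z w"
    and x_eq: "x = y + z"
    using orthogonal_subspace_decomp_exists by blast
  have y_ok: "y \<in> S \<and> (\<forall>w\<in>S. orthogonal (x - y) w)"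
    using y z x_eq assms by (metis add_diff_cancel_left' span_eq_iff)
  show ?thesis
  proof (rule ex1I[of _ y])
    fix y' assume y': "y' \<in> S \<and> (\<forall>w\<in>S. orthogonal (x - y') w)"
    then have "y' - y \<in> S" using y_ok assms by (simp add: subspace_diff)
    then have "orthogonal (x - y) (y' - y)" "orthogonal (x - y') (y' - y)"
      using y' y_ok by auto
    then have "orthogonal (y' - y) (y' - y)" by (simp add: orthogonal_def inner_diff_left)
    then show "y' = y" by (simp add: orthogonal_def)
  qed (rule y_ok)
qed

lemma
  assumes "subspace S"
  shows orth_proj_in: "orth_proj S x \<in> S"
    and orthogonal_orth_proj: "z \<in> S \<Longrightarrow> orthogonal (x - orth_proj S x) z"
  using theI'[OF orth_proj_ex1[OF assms, of x]] unfolding orth_proj_def by auto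

lemma orth_proj_eqI:
  assumes "subspace S" "y \<in> S" "\<And>z. z \<in> S \<Longrightarrow> orthogonal (x - y) z"
  shows "orth_proj S x = y"
  using orth_proj_ex1[OF assms(1), of x] orth_proj_in[OF assms(1)]
    orthogonal_orth_proj[OF assms(1)] assms by blast

lemma orth_proj_eq_0:
  assumes "subspace S" "\<And>z. z \<in> S \<Longrightarrow> orthogonal x z"
  shows "orth_proj S x = 0"
  using assms by (intro orth_proj_eqI) (auto simp: subspace_0)

lemma linear_orth_proj:
  assumes "subspace S"
  shows "linear (orth_proj S)"
proof (rule linearI)
  note in_S = orth_proj_in[OF assms] and orth = orthogonal_orth_proj[OF assms]
  fix x y
  show "orth_proj S (x + y) = orth_proj S x + orth_proj S y"
  proof (rule orth_proj_eqI[OF assms])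
    show "orth_proj S x + orth_proj S y \<in> S"
      using in_S assms by (simp add: subspace_add)
    fix z assume "z \<in> S"
    then have "orthogonal ((x - orth_proj S x) + (y - orth_proj S y)) z"
      using orth by (simp add: orthogonal_clauses orthogonal_commute)
    then show "orthogonal (x + y - (orth_proj S x + orth_proj S y)) z"
      by (simp add: algebra_simps)
  qed
next
  note in_S = orth_proj_in[OF assms] and orth = orthogonal_orth_proj[OF assms]
  fix c :: real and x
  show "orth_proj S (c *\<^sub>R x) = c *\<^sub>R orth_proj S x"
  proof (rule orth_proj_eqI[OF assms])
    show "c *\<^sub>R orth_proj S x \<in> S"
      using in_S assms by (simp add: subspace_scale)
    fix z assume "z \<in> S"
    then have "orthogonal (c *\<^sub>R (x - orth_proj S x)) z"
      using orth by (simp add: orthogonal_clauses orthogonal_commute)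
    then show "orthogonal (c *\<^sub>R x - c *\<^sub>R orth_proj S x) z"
      by (simp add: algebra_simps)
  qed
qed

lemma subspace_between_with_dim:
  fixes Z X :: "'a::euclidean_space set"
  assumes "subspace Z" "subspace X" "Z \<subseteq> X" "dim Z \<le> d" "d \<le> dim X"
  obtains W where "subspace W" "Z \<subseteq> W" "W \<subseteq> X" "dim W = d"
proof -
  obtain B0 where B0: "B0 \<subseteq> Z" "independent B0" "Z \<subseteq> span B0" "card B0 = dim Z"
    using basis_exists by blast
  obtain B where B: "B0 \<subseteq> B" "B \<subseteq> X" "independent B" "X \<subseteq> span B"
    using maximal_independent_subset_extend[of B0 X] B0 assms(3) by blast
  have "finite B" using B(3) finiteI_independent by blast
  moreover have "card B = dim X"
    using B assms(2) by (metis dim_eq_card_independent dim_span span_eq_iff span_mono subset_antisym)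
  ultimately have "d - card B0 \<le> card (B - B0)"
    using B(1) B0(4) assms(5) by (simp add: card_Diff_subset finite_subset)
  then obtain C where C: "C \<subseteq> B - B0" "card C = d - card B0"
    using obtain_subset_with_card_n by metis
  have indep: "independent (B0 \<union> C)"
    using B C by (meson Diff_subset independent_mono le_sup_iff order_trans)
  then have "card (B0 \<union> C) = d"
    using C B0(4) assms(4) finiteI_independent
    by (subst card_Un_disjoint) auto
  then have "dim (span (B0 \<union> C)) = d"
    using indep by (simp add: dim_span dim_eq_card_independent)
  moreover have "Z \<subseteq> span (B0 \<union> C)" using B0(3) by (meson span_mono sup_ge1 order_trans)
  moreover have "span (B0 \<union> C) \<subseteq> X"
    using B C assms(2) by (metis Diff_subset le_sup_iff order_trans span_minimal)
  ultimately show ?thesis using that subspace_span by blast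
qed

lemma contains_translate_linear_image:
  assumes "linear f" "contains_translate B A"
  shows "contains_translate (f ` B) (f ` A)"
proof -
  obtain t where "(\<lambda>x. t + x) ` A \<subseteq> B"
    using assms(2) unfolding contains_translate_def by blast
  then have "(\<lambda>x. f t + x) ` f ` A \<subseteq> f ` B"
    by (auto simp: linear_add[OF assms(1), symmetric])
  then show ?thesis unfolding contains_translate_def by blast
qed

lemma orth_proj_factor:
  fixes \<xi> W \<eta> :: "'a::euclidean_space set"
  assumes "subspace \<xi>" "subspace W" "subspace \<eta>"
    and "W \<subseteq> \<xi>" "orth_proj \<xi> ` \<eta> \<subseteq> W" "x \<in> \<xi>"
  shows "orth_proj \<eta> (orth_proj W x) = orth_proj \<eta> x"
proof -
  define w where "w = x - orth_proj W x"
  have "w \<in> \<xi>"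
    unfolding w_def using assms orth_proj_in[OF assms(2)] by (meson subsetD subspace_diff)
  have "orthogonal w y" if "y \<in> \<eta>" for y
  proof -
    have "orthogonal w (orth_proj \<xi> y)"
      unfolding w_def using that assms(5) orthogonal_orth_proj[OF assms(2)] by blast
    moreover have "orthogonal w (y - orth_proj \<xi> y)"
      using orthogonal_orth_proj[OF assms(1) \<open>w \<in> \<xi>\<close>] by (simp add: orthogonal_commute)
    ultimately show ?thesis by (simp add: orthogonal_def inner_diff_right)
  qed
  then have "orth_proj \<eta> w = 0" using orth_proj_eq_0[OF assms(3)] by blast
  then show ?thesis
    using linear_diff[OF linear_orth_proj[OF assms(3)], of x "orth_proj W x"]
    unfolding w_def by simp
qed

lemma set_proj_factor:
  assumes "subspace \<xi>" "subspace W" "subspace \<eta>"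
    and "W \<subseteq> \<xi>" "orth_proj \<xi> ` \<eta> \<subseteq> W" "S \<subseteq> \<xi>"
  shows "orth_proj \<eta> ` set_proj W S = set_proj \<eta> S"
  using orth_proj_factor[OF assms(1-5)] assms(6)
  unfolding set_proj_def image_comp by (intro image_cong) auto

theorem proposition3p6:
  fixes \<xi> K L :: "'a::euclidean_space set" and d :: nat
  assumes "subspace \<xi>"
    and "compact K" and "convex K" and "compact L" and "convex L"
    and "K \<subseteq> \<xi>" and "L \<subseteq> \<xi>"
    and "1 \<le> d" and "d \<le> dim \<xi>"
    and "\<forall>\<eta>. subspace \<eta> \<and> dim \<eta> = d \<and> \<eta> \<subseteq> \<xi> \<longrightarrow>
           contains_translate (set_proj \<eta> L) (set_proj \<eta> K)"
  shows "\<forall>\<eta>. subspace \<eta> \<and> dim \<eta> = d \<longrightarrow>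
           contains_translate (set_proj \<eta> L) (set_proj \<eta> K)"
proof (intro allI impI, elim conjE)
  fix \<eta> :: "'a set" assume "subspace \<eta>" "dim \<eta> = d"
  let ?Z = "orth_proj \<xi> ` \<eta>"
  have "subspace ?Z" "dim ?Z \<le> d" "?Z \<subseteq> \<xi>"
    using linear_orth_proj[OF assms(1)] \<open>subspace \<eta>\<close> \<open>dim \<eta> = d\<close> orth_proj_in[OF assms(1)]
    by (auto simp: linear_subspace_image dim_image_le)
  then obtain W where W: "subspace W" "?Z \<subseteq> W" "W \<subseteq> \<xi>" "dim W = d"
    using subspace_between_with_dim[OF _ assms(1) _ _ assms(9)] by metis
  then have "contains_translate (set_proj W L) (set_proj W K)"
    using assms(10) by blast
  then have "contains_translate (orth_proj \<eta> ` set_proj W L) (orth_proj \<eta> ` set_proj W K)"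
    by (rule contains_translate_linear_image[OF linear_orth_proj[OF \<open>subspace \<eta>\<close>]])
  then show "contains_translate (set_proj \<eta> L) (set_proj \<eta> K)"
    using set_proj_factor[OF assms(1) W(1) \<open>subspace \<eta>\<close> W(3) W(2)] assms(6,7) by simp
qed

end
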